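(* Let $N_2$ be the set of non-negative integers whose base-3 representation does not use the digit $2$. For each integer $n\ge0$ let $\ell_n^+,\ell_n^-$ be the unique non-negative integers with $\ell_n^+,\ell_n^-,\ell_n^++\ell_n^-\in N_2$ and $n=\ell_n^+-\ell_n^-$, and set $\ell_n=\ell_n^++\ell_n^-$. Let $\alpha,\beta$ be the maps on finite and infinite words over $X_3=\{0,1,2\}$ defined recursively by \[\alpha(0w)=0\alpha(w),\ \alpha(1w)=1\alpha(w),\ \alpha(2w)=1\beta(w),\quad \beta(0w)=1\alpha(w),\ \beta(1w)=1\beta(w),\ \beta(2w)=0\beta(w).\] For $n\ge0$ let $(n)_3=n_0n_1n_2\dots$ be the infinite word of base-3 digits of $n$, least significant first, ending in $0^\infty$. Then for every $n\ge0$ the infinite word $\alpha((n)_3)$ is the infinite word of base-3 digits of $\ell_n$, least significant first; i.e. the sequence $(\ell_n)_{n\ge0}$ is the ternary transducer integer sequence generated by the transducer with states $\alpha,\beta$ started at $\alpha$.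
   Context: The recursion for $\alpha,\beta$ determines their action on infinite words letter by letter. *)

theory Defs
  imports Main
begin

text \<open>Infinite words over X_3 = {0,1,2} are sequences nat => nat (position k = k-th letter).\<close>

definition ternary :: "nat \<Rightarrow> nat \<Rightarrow> nat" where
  "ternary n k = (n div 3 ^ k) mod 3"

definition N2 :: "nat set" where
  "N2 = {m. \<forall>k. ternary m k \<noteq> 2}"

definition ell_pair :: "nat \<Rightarrow> nat \<times> nat" where
  "ell_pair n = (THE p. fst p \<in> N2 \<and> snd p \<in> N2 \<and> fst p + snd p \<in> N2
                      \<and> int n = int (fst p) - int (snd p))"

definition ell :: "nat \<Rightarrow> nat" where
  "ell n = fst (ell_pair n) + snd (ell_pair n)"

datatype state = Alpha | Beta

fun tr_out :: "state \<Rightarrow> nat \<Rightarrow> nat" where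
  "tr_out Alpha x = (if x = 0 then 0 else 1)"
| "tr_out Beta x = (if x = 2 then 0 else 1)"

fun tr_next :: "state \<Rightarrow> nat \<Rightarrow> state" where
  "tr_next Alpha x = (if x = 2 then Beta else Alpha)"
| "tr_next Beta x = (if x = 0 then Alpha else Beta)"

primrec tr_state :: "state \<Rightarrow> (nat \<Rightarrow> nat) \<Rightarrow> nat \<Rightarrow> state" where
  "tr_state q w 0 = q"
| "tr_state q w (Suc k) = tr_next (tr_state q w k) (w k)"

definition tr_apply :: "state \<Rightarrow> (nat \<Rightarrow> nat) \<Rightarrow> (nat \<Rightarrow> nat)" where
  "tr_apply q w k = tr_out (tr_state q w k) (w k)"

end

theory Submission
  imports Defs
begin

text \<open>
  The pairs (l+, l-) are the balanced-ternary representations of n: l+ and l- mark the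
  positions of the digits 1 and -1, and l+ + l- in N_2 says that these positions are
  disjoint. Such representations are unique, and splitting off the lowest balanced digit
  gives the recursion ell n = 3 ell ((n + 1) div 3) + [n mod 3 > 0]. The transducer runs
  this recursion on the ternary digits of n, with state beta standing for a pending carry
  of 1: started in a state with pending carry c, it maps (n)_3 to the digits of ell (n + c).
\<close>

lemma ternary_0: "ternary m 0 = m mod 3"
  by (simp add: ternary_def)

lemma ternary_Suc: "ternary m (Suc k) = ternary (m div 3) k"
  by (simp add: ternary_def div_mult2_eq)

lemma N2_iff: "m \<in> N2 \<longleftrightarrow> m mod 3 \<noteq> 2 \<and> m div 3 \<in> N2"
proof -
  have "(\<forall>k. ternary m k \<noteq> 2) \<longleftrightarrow> ternary m 0 \<noteq> 2 \<and> (\<forall>k. ternary m (Suc k) \<noteq> 2)"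
    by (metis not0_implies_Suc)
  then show ?thesis by (simp add: N2_def ternary_0 ternary_Suc)
qed

definition N2_pair :: "nat \<Rightarrow> nat \<Rightarrow> bool" where
  "N2_pair a b \<longleftrightarrow> a \<in> N2 \<and> b \<in> N2 \<and> a + b \<in> N2"

lemma N2_pair_iff:
  "N2_pair a b \<longleftrightarrow> a mod 3 + b mod 3 \<le> 1 \<and> N2_pair (a div 3) (b div 3)"
proof -
  have "(a + b) mod 3 = 2 \<longleftrightarrow> a mod 3 = 1 \<and> b mod 3 = 1"
    if "a mod 3 \<noteq> 2" "b mod 3 \<noteq> 2"
  proof -
    have "a mod 3 \<in> {0, 1}" "b mod 3 \<in> {0, 1}" using that by auto
    then show ?thesis by (auto simp: mod_add_eq[of a 3 b, symmetric])
  qed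
  moreover have "(a + b) div 3 = a div 3 + b div 3" if "a mod 3 + b mod 3 \<le> 1"
    using that div_add1_eq[of a b 3] by linarith
  ultimately show ?thesis
    unfolding N2_pair_def N2_iff[of a] N2_iff[of b] N2_iff[of "a + b"] by auto
qed

lemma int_eq_div_mod3: "int a = 3 * int (a div 3) + int (a mod 3)"
  using div_mult_mod_eq[of a 3] by (metis of_nat_add of_nat_mult of_nat_numeral mult.commute)

lemma balanced_digits:
  fixes a b :: nat
  assumes "a mod 3 + b mod 3 \<le> 1"
  shows "a mod 3 = of_bool ((int a - int b) mod 3 = 1)"
    and "b mod 3 = of_bool ((int a - int b) mod 3 = 2)"
proof -
  have diff: "(int a - int b) mod 3 = (int (a mod 3) - int (b mod 3)) mod 3"
    by (simp add: mod_diff_eq of_nat_mod)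
  consider "a mod 3 = 0" "b mod 3 = 0" | "a mod 3 = 1" "b mod 3 = 0" | "a mod 3 = 0" "b mod 3 = 1"
    using assms by linarith
  then show "a mod 3 = of_bool ((int a - int b) mod 3 = 1)"
    and "b mod 3 = of_bool ((int a - int b) mod 3 = 2)"
    by (cases; simp add: diff)+
qed

lemma balanced_digit_unique:
  fixes a b c d :: nat
  assumes "a mod 3 + b mod 3 \<le> 1" "c mod 3 + d mod 3 \<le> 1"
    and diff: "int a - int b = int c - int d"
  shows "a mod 3 = c mod 3 \<and> b mod 3 = d mod 3
    \<and> int (a div 3) - int (b div 3) = int (c div 3) - int (d div 3)"
proof -
  have "a mod 3 = c mod 3" "b mod 3 = d mod 3"
    using balanced_digits[OF assms(1)] balanced_digits[OF assms(2)] diff by simp_all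
  then show ?thesis
    using diff int_eq_div_mod3[of a] int_eq_div_mod3[of b] int_eq_div_mod3[of c] int_eq_div_mod3[of d]
    by linarith
qed

lemma N2_pair_unique:
  assumes "N2_pair a b" "N2_pair c d" "int a - int b = int c - int d"
  shows "a = c \<and> b = d"
  using assms
proof (induction "a + b + c + d" arbitrary: a b c d rule: less_induct)
  case less
  show ?case
  proof (cases "a + b + c + d = 0")
    case True
    then show ?thesis by simp
  next
    case False
    have digits: "a mod 3 + b mod 3 \<le> 1" "c mod 3 + d mod 3 \<le> 1"
      and high: "N2_pair (a div 3) (b div 3)" "N2_pair (c div 3) (d div 3)"
      using less.prems(1,2) N2_pair_iff by blast+
    note low = balanced_digit_unique[OF digits less.prems(3)]
    have "a div 3 + b div 3 + c div 3 + d div 3 < a + b + c + d"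
      using False by linarith
    then have "a div 3 = c div 3 \<and> b div 3 = d div 3"
      using less.hyps high low by blast
    then show ?thesis
      using low by (metis div_mult_mod_eq)
  qed
qed

lemma N2_0: "0 \<in> N2"
  by (simp add: N2_def ternary_def)

lemma N2_pair_step:
  assumes "N2_pair a b" "int ((m + 1) div 3) = int a - int b"
  shows "N2_pair (3 * a + of_bool (m mod 3 = 1)) (3 * b + of_bool (m mod 3 = 2))"
    and "int m = int (3 * a + of_bool (m mod 3 = 1)) - int (3 * b + of_bool (m mod 3 = 2))"
proof -
  show "N2_pair (3 * a + of_bool (m mod 3 = 1)) (3 * b + of_bool (m mod 3 = 2))"
    using assms(1) by (subst N2_pair_iff) auto
  have "(m + 1) div 3 = m div 3 + of_bool (m mod 3 = 2)"
    using div_add1_eq[of m 1 3] by auto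
  then show "int m = int (3 * a + of_bool (m mod 3 = 1)) - int (3 * b + of_bool (m mod 3 = 2))"
    using assms(2) int_eq_div_mod3[of m] by auto
qed

lemma N2_pair_exists: "\<exists>a b. N2_pair a b \<and> int m = int a - int b"
proof (induction m rule: less_induct)
  case (less m)
  show ?case
  proof (cases "m = 0")
    case True
    then show ?thesis
      using N2_0 by (auto simp: N2_pair_def)
  next
    case False
    then have "(m + 1) div 3 < m"
      by linarith
    then obtain a b where "N2_pair a b" "int ((m + 1) div 3) = int a - int b"
      using less.IH by blast
    then show ?thesis
      using N2_pair_step by blast
  qed
qed

lemma ell_pair_eqI:
  assumes "N2_pair a b" "int m = int a - int b"
  shows "ell_pair m = (a, b)"
  unfolding ell_pair_def
proof (rule the_equality)
  show "fst (a, b) \<in> N2 \<and> snd (a, b) \<in> N2 \<and> fst (a, b) + snd (a, b) \<in> N2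
      \<and> int m = int (fst (a, b)) - int (snd (a, b))"
    using assms by (simp add: N2_pair_def)
next
  fix p :: "nat \<times> nat"
  assume "fst p \<in> N2 \<and> snd p \<in> N2 \<and> fst p + snd p \<in> N2 \<and> int m = int (fst p) - int (snd p)"
  then have "N2_pair (fst p) (snd p)" "int (fst p) - int (snd p) = int a - int b"
    using assms by (simp_all add: N2_pair_def)
  then have "fst p = a \<and> snd p = b"
    using N2_pair_unique assms(1) by blast
  then show "p = (a, b)"
    by (simp add: prod_eq_iff)
qed

lemma ell_rec: "ell m = 3 * ell ((m + 1) div 3) + of_bool (m mod 3 \<noteq> 0)"
proof -
  obtain a b where ab: "N2_pair a b" "int ((m + 1) div 3) = int a - int b"
    using N2_pair_exists by blast
  have "ell ((m + 1) div 3) = a + b"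
    using ell_pair_eqI[OF ab] by (simp add: ell_def)
  moreover have "ell m = (3 * a + of_bool (m mod 3 = 1)) + (3 * b + of_bool (m mod 3 = 2))"
    using ell_pair_eqI[OF N2_pair_step[OF ab]] by (simp add: ell_def)
  moreover have "m mod 3 = 0 \<or> m mod 3 = 1 \<or> m mod 3 = 2"
    by linarith
  ultimately show ?thesis
    by auto
qed

lemma ternary_ell_0: "ternary (ell m) 0 = of_bool (m mod 3 \<noteq> 0)"
  by (subst ell_rec) (simp add: ternary_0)

lemma ternary_ell_Suc: "ternary (ell m) (Suc k) = ternary (ell ((m + 1) div 3)) k"
  by (subst ell_rec) (simp add: ternary_Suc)

lemma tr_state_Suc: "tr_state q w (Suc k) = tr_state (tr_next q (w 0)) (\<lambda>i. w (Suc i)) k"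
  by (induction k) auto

lemma tr_apply_Suc: "tr_apply q w (Suc k) = tr_apply (tr_next q (w 0)) (\<lambda>i. w (Suc i)) k"
  unfolding tr_apply_def tr_state_Suc ..

definition pending_carry :: "state \<Rightarrow> nat" where
  "pending_carry q = of_bool (q = Beta)"

lemma tr_out_pending_carry: "tr_out q (n mod 3) = of_bool ((n + pending_carry q) mod 3 \<noteq> 0)"
proof -
  have "n mod 3 = 0 \<or> n mod 3 = 1 \<or> n mod 3 = 2"
    by linarith
  then show ?thesis
    by (cases q) (auto simp: pending_carry_def mod_Suc)
qed

lemma pending_carry_tr_next:
  "n div 3 + pending_carry (tr_next q (n mod 3)) = (n + pending_carry q + 1) div 3"
proof -
  have split: "(n + k) div 3 = n div 3 + (n mod 3 + k) div 3" if "k < 3" for k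
    using div_add1_eq[of n k 3] that by simp
  consider "n mod 3 = 0" | "n mod 3 = 1" | "n mod 3 = 2"
    by linarith
  then show ?thesis
    using split[of 1] split[of 2] by cases (cases q; simp add: pending_carry_def)+
qed

lemma tr_apply_ternary: "tr_apply q (ternary n) = ternary (ell (n + pending_carry q))"
proof
  fix k
  show "tr_apply q (ternary n) k = ternary (ell (n + pending_carry q)) k"
  proof (induction k arbitrary: q n)
    case 0
    show ?case
      unfolding tr_apply_def ternary_ell_0 by (simp add: ternary_0 tr_out_pending_carry)
  next
    case (Suc k)
    have shift: "(\<lambda>i. ternary n (Suc i)) = ternary (n div 3)"
      by (simp add: ternary_Suc)
    have "tr_apply q (ternary n) (Suc k) = tr_apply (tr_next q (n mod 3)) (ternary (n div 3)) k"
      by (simp add: tr_apply_Suc shift ternary_0)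
    also have "\<dots> = ternary (ell (n div 3 + pending_carry (tr_next q (n mod 3)))) k"
      by (rule Suc.IH)
    also have "\<dots> = ternary (ell (n + pending_carry q)) (Suc k)"
      by (simp add: pending_carry_tr_next ternary_ell_Suc)
    finally show ?case .
  qed
qed

theorem mainTheorem6:
  fixes n :: nat
  shows "tr_apply Alpha (ternary n) = ternary (ell n)"
  using tr_apply_ternary[of Alpha n] by (simp add: pending_carry_def)

end
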